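(* In the setting of fiber bundle complexes $B\otimes_\varphi F$ (with $B,F$ two-term complexes over $\mathbb{F}_2$), suppose that (1) every $\varphi(b^1,b^0)$ induces the identity on $H_0(F)$ and on $H_1(F)$; (2) $F$ has an augmentation $\epsilon:F_0\to\mathbb{F}_2$ (i.e. $\epsilon\partial^F=0$) whose induced map $H_0(F)\to\mathbb{F}_2$ is an isomorphism; (3) $H_0(B)=0$. Then the chain map $\pi_*:B\otimes_\varphi F\to B$ given by $b\otimes f\mapsto\epsilon(f)b$ on $B_1\otimes F_0$ and on $B_0\otimes F_0$, and by $0$ on $B_0\otimes F_1$ and $B_1\otimes F_1$, induces an isomorphism $H_1(B\otimes_\varphi F)\to H_1(B)$; and the map $\pi^*$ sending $\beta\in B^1=B_1^*$ to the functional on $(B\otimes_\varphi F)_1=(B_1\otimes F_0)\oplus(B_0\otimes F_1)$ given by $\beta\otimes\epsilon$ on $B_1\otimes F_0$ and $0$ on $B_0\otimes F_1$ induces an isomorphism $H^1(B)\to H^1(B\otimes_\varphi F)$.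
   Context: $\operatorname{Aut}(F)$ denotes the group of chain automorphisms of $F=(F_1\xrightarrow{\partial^F}F_0)$. $B=(B_1\xrightarrow{\partial^B}B_0)$ has distinguished bases; write $b^0\in\partial^Bb^1$ if basis vector $b^0$ appears with nonzero coefficient in $\partial^Bb^1$. A connection $\varphi$ assigns to each such pair an element $\varphi(b^1,b^0)\in\operatorname{Aut}(F)$; $\partial_\varphi(b^1\otimes f)=\sum_{b^0\in\partial^Bb^1}b^0\otimes\varphi(b^1,b^0)(f)$. $B\otimes_\varphi F$ is the total complex with degree-2,1,0 parts $B_1\otimes F_1$, $(B_1\otimes F_0)\oplus(B_0\otimes F_1)$, $B_0\otimes F_0$ and differential $\partial_\varphi+\operatorname{id}\otimes\partial^F$. Cohomology $H^i$ of a complex of finite-dimensional spaces is the homology of the dual complex with transposed differentials. *)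

theory Defs
  imports Main "HOL-Library.Z2"
begin

text \<open>Finite-dimensional F_2-vector spaces with distinguished bases are modelled by
  finite index sets S; a vector is a coordinate function S -> bit vanishing outside S.
  A linear map from span S to span T is a matrix M with M i j = coefficient of the
  basis vector j in the image of the basis vector i.\<close>

definition vecs :: "'i set \<Rightarrow> ('i \<Rightarrow> bit) set" where
  "vecs S = {v. \<forall>x. x \<notin> S \<longrightarrow> v x = 0}"

definition mat_app :: "'i set \<Rightarrow> 'j set \<Rightarrow> ('i \<Rightarrow> 'j \<Rightarrow> bit) \<Rightarrow> ('i \<Rightarrow> bit) \<Rightarrow> ('j \<Rightarrow> bit)" where
  "mat_app S T M v = (\<lambda>j. if j \<in> T then (\<Sum>i\<in>S. v i * M i j) else 0)"

definition transp :: "('i \<Rightarrow> 'j \<Rightarrow> bit) \<Rightarrow> ('j \<Rightarrow> 'i \<Rightarrow> bit)" where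
  "transp M = (\<lambda>j i. M i j)"

definition cycles :: "'y set \<Rightarrow> 'z set \<Rightarrow> ('y \<Rightarrow> 'z \<Rightarrow> bit) \<Rightarrow> ('y \<Rightarrow> bit) set" where
  "cycles Y Z e = {y \<in> vecs Y. mat_app Y Z e y = (\<lambda>_. 0)}"

definition bounds :: "'x set \<Rightarrow> 'y set \<Rightarrow> ('x \<Rightarrow> 'y \<Rightarrow> bit) \<Rightarrow> ('y \<Rightarrow> bit) set" where
  "bounds X Y d = mat_app X Y d ` vecs X"

definition induces_homology_iso ::
  "'x set \<Rightarrow> 'y set \<Rightarrow> 'z set \<Rightarrow> ('x \<Rightarrow> 'y \<Rightarrow> bit) \<Rightarrow> ('y \<Rightarrow> 'z \<Rightarrow> bit) \<Rightarrow>
   'x2 set \<Rightarrow> 'y2 set \<Rightarrow> 'z2 set \<Rightarrow> ('x2 \<Rightarrow> 'y2 \<Rightarrow> bit) \<Rightarrow> ('y2 \<Rightarrow> 'z2 \<Rightarrow> bit) \<Rightarrow>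
   ('y \<Rightarrow> 'y2 \<Rightarrow> bit) \<Rightarrow> bool" where
  "induces_homology_iso X Y Z d e X' Y' Z' d' e' f \<longleftrightarrow>
     (\<forall>y\<in>cycles Y Z e. mat_app Y Y' f y \<in> cycles Y' Z' e') \<and>
     (\<forall>y\<in>bounds X Y d. mat_app Y Y' f y \<in> bounds X' Y' d') \<and>
     (\<forall>z\<in>cycles Y' Z' e'. \<exists>y\<in>cycles Y Z e. (\<lambda>j. mat_app Y Y' f y j - z j) \<in> bounds X' Y' d') \<and>
     (\<forall>y\<in>cycles Y Z e. mat_app Y Y' f y \<in> bounds X' Y' d' \<longrightarrow> y \<in> bounds X Y d)"

definition induces_identity_on_homology ::
  "'x set \<Rightarrow> 'y set \<Rightarrow> 'z set \<Rightarrow> ('x \<Rightarrow> 'y \<Rightarrow> bit) \<Rightarrow> ('y \<Rightarrow> 'z \<Rightarrow> bit) \<Rightarrow>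
   ('y \<Rightarrow> 'y \<Rightarrow> bit) \<Rightarrow> bool" where
  "induces_identity_on_homology X Y Z d e g \<longleftrightarrow>
     (\<forall>y\<in>cycles Y Z e. (\<lambda>j. mat_app Y Y g y j - y j) \<in> bounds X Y d)"

definition chain_aut ::
  "'k1 set \<Rightarrow> 'k0 set \<Rightarrow> ('k1 \<Rightarrow> 'k0 \<Rightarrow> bit) \<Rightarrow>
   ('k1 \<Rightarrow> 'k1 \<Rightarrow> bit) \<times> ('k0 \<Rightarrow> 'k0 \<Rightarrow> bit) \<Rightarrow> bool" where
  "chain_aut K1 K0 dF g \<longleftrightarrow>
     bij_betw (mat_app K1 K1 (fst g)) (vecs K1) (vecs K1) \<and>
     bij_betw (mat_app K0 K0 (snd g)) (vecs K0) (vecs K0) \<and>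
     (\<forall>v\<in>vecs K1. mat_app K1 K0 dF (mat_app K1 K1 (fst g) v) =
                   mat_app K0 K0 (snd g) (mat_app K1 K0 dF v))"

definition is_connection ::
  "'b1 set \<Rightarrow> 'b0 set \<Rightarrow> ('b1 \<Rightarrow> 'b0 \<Rightarrow> bit) \<Rightarrow>
   'k1 set \<Rightarrow> 'k0 set \<Rightarrow> ('k1 \<Rightarrow> 'k0 \<Rightarrow> bit) \<Rightarrow>
   ('b1 \<Rightarrow> 'b0 \<Rightarrow> ('k1 \<Rightarrow> 'k1 \<Rightarrow> bit) \<times> ('k0 \<Rightarrow> 'k0 \<Rightarrow> bit)) \<Rightarrow> bool" where
  "is_connection I1 I0 dB K1 K0 dF phi \<longleftrightarrow>
     (\<forall>b1\<in>I1. \<forall>b0\<in>I0. dB b1 b0 \<noteq> 0 \<longrightarrow> chain_aut K1 K0 dF (phi b1 b0))"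

text \<open>The total complex B \<otimes>_phi F: degree 2 basis I1 x K1, degree 1 basis
  (I1 x K0) + (I0 x K1), degree 0 basis I0 x K0; differential partial_phi + id \<otimes> dF.\<close>

definition tot_C1 :: "'b1 set \<Rightarrow> 'b0 set \<Rightarrow> 'k1 set \<Rightarrow> 'k0 set \<Rightarrow> (('b1 \<times> 'k0) + ('b0 \<times> 'k1)) set" where
  "tot_C1 I1 I0 K1 K0 = Inl ` (I1 \<times> K0) \<union> Inr ` (I0 \<times> K1)"

fun tot_d2 ::
  "('b1 \<Rightarrow> 'b0 \<Rightarrow> bit) \<Rightarrow> ('k1 \<Rightarrow> 'k0 \<Rightarrow> bit) \<Rightarrow>
   ('b1 \<Rightarrow> 'b0 \<Rightarrow> ('k1 \<Rightarrow> 'k1 \<Rightarrow> bit) \<times> ('k0 \<Rightarrow> 'k0 \<Rightarrow> bit)) \<Rightarrow>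
   ('b1 \<times> 'k1) \<Rightarrow> (('b1 \<times> 'k0) + ('b0 \<times> 'k1)) \<Rightarrow> bit" where
  "tot_d2 dB dF phi (b1, k1) (Inl (b1', k0)) = (if b1 = b1' then dF k1 k0 else 0)"
| "tot_d2 dB dF phi (b1, k1) (Inr (b0, k1')) = dB b1 b0 * fst (phi b1 b0) k1 k1'"

fun tot_d1 ::
  "('b1 \<Rightarrow> 'b0 \<Rightarrow> bit) \<Rightarrow> ('k1 \<Rightarrow> 'k0 \<Rightarrow> bit) \<Rightarrow>
   ('b1 \<Rightarrow> 'b0 \<Rightarrow> ('k1 \<Rightarrow> 'k1 \<Rightarrow> bit) \<times> ('k0 \<Rightarrow> 'k0 \<Rightarrow> bit)) \<Rightarrow>
   (('b1 \<times> 'k0) + ('b0 \<times> 'k1)) \<Rightarrow> ('b0 \<times> 'k0) \<Rightarrow> bit" where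
  "tot_d1 dB dF phi (Inl (b1, k0)) (b0, k0') = dB b1 b0 * snd (phi b1 b0) k0 k0'"
| "tot_d1 dB dF phi (Inr (b0, k1)) (b0', k0) = (if b0 = b0' then dF k1 k0 else 0)"

text \<open>pi_* in degree 1 (matrix (B\<otimes>F)_1 -> B_1) and pi^* on B^1 (matrix B_1 -> (B\<otimes>F)_1 in
  dual coordinates); eps k0 is the value of the augmentation on basis vector k0.\<close>

fun pi_lower :: "('k0 \<Rightarrow> bit) \<Rightarrow> (('b1 \<times> 'k0) + ('b0 \<times> 'k1)) \<Rightarrow> 'b1 \<Rightarrow> bit" where
  "pi_lower eps (Inl (b1, k0)) b1' = (if b1 = b1' then eps k0 else 0)"
| "pi_lower eps (Inr _) b1' = 0"

fun pi_upper :: "('k0 \<Rightarrow> bit) \<Rightarrow> 'b1 \<Rightarrow> (('b1 \<times> 'k0) + ('b0 \<times> 'k1)) \<Rightarrow> bit" where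
  "pi_upper eps b1 (Inl (b1', k0)) = (if b1 = b1' then eps k0 else 0)"
| "pi_upper eps b1 (Inr _) = 0"

end

theory Submission
  imports Defs
begin

text \<open>Write a 1-chain of B \<otimes>_phi F as a pair (u, w) with u in B_1 \<otimes> F_0 and w in
  B_0 \<otimes> F_1, and fix e in F_0 with eps e = 1. Since eps identifies H_0(F) with F_2 and
  the phi act trivially on H_0(F), a cycle z of B lifts to z \<otimes> e, corrected in
  B_0 \<otimes> F_1 by homotopies from phi e to e; this gives surjectivity of pi_*.
  If pi_* x = 0 for a 1-cycle x, every fibre of u is a dF-boundary, and subtracting d2 of
  its lift leaves a cycle living in B_0 \<otimes> F_1 whose fibres are cycles of F. As
  H_0(B) = 0, dB has a right inverse c, and because the phi fix the cycles of F,
  d2 (c \<otimes> w) = w, so x is a boundary.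
  The cohomological statement is the dual argument: the B_0 \<otimes> F_1 part of a 1-cocycle
  annihilates the cycles of F (using H_0(B) = 0 once more), hence factors through dF,
  and once this coboundary is removed what remains is beta \<otimes> eps because H^0(F) is
  spanned by eps.\<close>

subsection \<open>Coordinate linear algebra over F_2\<close>

text \<open>The simp rules of Z2 rewrite \<open>+\<close> and \<open>*\<close> on bit into XOR and AND, which defeats
  ring normalisation.\<close>
declare add_bit_eq_xor[simp del] mult_bit_eq_and[simp del]

lemma bit_add_eq_iff: "(a::bit) + b = c \<longleftrightarrow> a = b + c"
  by (cases a; cases b; cases c) simp_all

lemma bit_add_eq_0_iff: "(a::bit) + b = 0 \<longleftrightarrow> a = b"
  by (cases a; cases b) simp_all

lemma vecsI: "(\<And>x. x \<notin> S \<Longrightarrow> v x = 0) \<Longrightarrow> v \<in> vecs S"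
  by (auto simp: vecs_def)

lemma vecsD: "v \<in> vecs S \<Longrightarrow> x \<notin> S \<Longrightarrow> v x = 0"
  by (auto simp: vecs_def)

lemma mat_app_vecs [simp]: "mat_app S T M v \<in> vecs T"
  by (auto simp: vecs_def mat_app_def)

lemma mat_app_in: "j \<in> T \<Longrightarrow> mat_app S T M v j = (\<Sum>i\<in>S. v i * M i j)"
  by (simp add: mat_app_def)

lemma mat_app_out: "j \<notin> T \<Longrightarrow> mat_app S T M v j = 0"
  by (simp add: mat_app_def)

lemma mat_app_zero [simp]: "mat_app S T M (\<lambda>_. 0) = (\<lambda>_. 0)"
  by (rule ext) (simp add: mat_app_def)

lemma mat_app_cong: "(\<And>i. i \<in> S \<Longrightarrow> v i = w i) \<Longrightarrow> mat_app S T M v = mat_app S T M w"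
  by (auto simp: mat_app_def intro!: sum.cong ext)

lemma mat_app_add:
  "mat_app S T M (\<lambda>i. v i + w i) = (\<lambda>j. mat_app S T M v j + mat_app S T M w j)"
  by (auto simp: mat_app_def sum.distrib distrib_right)

lemma mat_app_scale: "mat_app S T M (\<lambda>i. c * v i) = (\<lambda>j. c * mat_app S T M v j)"
  by (auto simp: mat_app_def sum_distrib_left mult.assoc)

lemma mat_app_sum:
  "mat_app S T M (\<lambda>i. \<Sum>a\<in>A. f a i) = (\<lambda>j. \<Sum>a\<in>A. mat_app S T M (f a) j)"
  by (auto simp: mat_app_def sum_distrib_right intro!: ext) (rule sum.swap)

lemma bounds_from_empty [simp]: "bounds {} T M = {\<lambda>_. 0}"
proof -
  have "mat_app {} T M v = (\<lambda>_. 0)" for v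
    by (rule ext) (simp add: mat_app_def)
  moreover have "(\<lambda>_. 0) \<in> vecs {}"
    by (simp add: vecs_def)
  ultimately show ?thesis
    unfolding bounds_def by auto
qed

lemma cycles_to_empty [simp]: "cycles S {} M = vecs S"
  by (auto simp: cycles_def mat_app_def)

lemma cycles_iff_sums: "y \<in> cycles S T M \<longleftrightarrow> y \<in> vecs S \<and> (\<forall>j\<in>T. (\<Sum>i\<in>S. y i * M i j) = 0)"
  by (auto simp: cycles_def mat_app_def fun_eq_iff)

lemma bounds_add:
  assumes "y \<in> bounds X Y d" "y' \<in> bounds X Y d"
  shows "(\<lambda>j. y j + y' j) \<in> bounds X Y d"
proof -
  obtain v v' where v: "v \<in> vecs X" "v' \<in> vecs X" "y = mat_app X Y d v" "y' = mat_app X Y d v'"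
    using assms by (auto simp: bounds_def)
  show ?thesis
    unfolding bounds_def
  proof (rule image_eqI)
    show "(\<lambda>i. v i + v' i) \<in> vecs X"
      using v by (auto simp: vecs_def)
  qed (simp add: v mat_app_add)
qed

definition basis_vec :: "'i \<Rightarrow> 'i \<Rightarrow> bit" where
  "basis_vec k i = (if i = k then 1 else 0)"

lemma basis_vec_vecs: "k \<in> S \<Longrightarrow> basis_vec k \<in> vecs S"
  by (auto simp: vecs_def basis_vec_def)

lemma sum_basis_vec_mult:
  assumes "finite S" "k \<in> S"
  shows "(\<Sum>i\<in>S. basis_vec k i * f i) = (f k :: bit)"
proof -
  have "(\<Sum>i\<in>S. basis_vec k i * f i) = (\<Sum>i\<in>S. if i = k then f i else 0)"
    by (rule sum.cong) (auto simp: basis_vec_def)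
  with assms show ?thesis
    by simp
qed

lemma sum_mult_basis_vec:
  "finite S \<Longrightarrow> k \<in> S \<Longrightarrow> (\<Sum>i\<in>S. f i * basis_vec k i) = (f k :: bit)"
  using sum_basis_vec_mult[of S k f] by (simp add: mult.commute)

lemma mat_app_basis_vec:
  "finite S \<Longrightarrow> k \<in> S \<Longrightarrow> j \<in> T \<Longrightarrow> mat_app S T M (basis_vec k) j = M k j"
  by (simp add: mat_app_in sum_basis_vec_mult)

lemma sum_mult_sum_swap:
  "(\<Sum>i\<in>A. f i * (\<Sum>j\<in>B. g j * h i j)) = (\<Sum>j\<in>B. g j * (\<Sum>i\<in>A. f i * h i j :: bit))"
proof -
  have "(\<Sum>i\<in>A. f i * (\<Sum>j\<in>B. g j * h i j)) = (\<Sum>i\<in>A. \<Sum>j\<in>B. g j * (f i * h i j))"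
    by (simp add: sum_distrib_left mult_ac)
  also have "\<dots> = (\<Sum>j\<in>B. \<Sum>i\<in>A. g j * (f i * h i j))"
    by (rule sum.swap)
  finally show ?thesis
    by (simp add: sum_distrib_left)
qed

lemma sum_mult_mat_app:
  "(\<Sum>i\<in>S. y i * (\<Sum>j\<in>T. p j * M i j)) = (\<Sum>j\<in>T. p j * mat_app S T M y j)"
  by (subst sum_mult_sum_swap) (simp add: mat_app_in mult.commute)

lemma transp_comp_zero:
  assumes "finite X"
    and zero: "\<And>v. v \<in> vecs X \<Longrightarrow> mat_app Y Z e (mat_app X Y d v) = (\<lambda>_. 0)"
  shows "mat_app Y X (transp d) (mat_app Z Y (transp e) w) = (\<lambda>_. 0)"
proof
  fix x
  show "mat_app Y X (transp d) (mat_app Z Y (transp e) w) x = 0"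
  proof (cases "x \<in> X")
    case True
    have "mat_app Y X (transp d) (mat_app Z Y (transp e) w) x
        = (\<Sum>y\<in>Y. (\<Sum>z\<in>Z. w z * e y z) * d x y)"
      using True by (simp add: mat_app_in transp_def)
    also have "\<dots> = (\<Sum>z\<in>Z. w z * (\<Sum>y\<in>Y. d x y * e y z))"
      by (simp add: sum_distrib_left sum_distrib_right mult_ac) (rule sum.swap)
    also have "\<dots> = (\<Sum>z\<in>Z. w z * mat_app Y Z e (mat_app X Y d (basis_vec x)) z)"
      using True assms(1) by (intro sum.cong) (auto simp: mat_app_in sum_basis_vec_mult)
    finally show ?thesis
      by (simp add: zero[OF basis_vec_vecs[OF True]])
  qed (simp add: mat_app_out)
qed

lemma functional_vanishing_on_cycles_shift:
  fixes M :: "'i \<Rightarrow> 'j \<Rightarrow> bit"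
  assumes e0: "e0 \<in> cycles S T M" "(\<Sum>i\<in>S. e0 i * M i t) = 1"
    and vanish: "\<forall>y\<in>cycles S (insert t T) M. (\<Sum>i\<in>S. \<phi> i * y i) = 0"
    and a: "a = (\<Sum>i\<in>S. \<phi> i * e0 i)"
  shows "\<forall>y\<in>cycles S T M. (\<Sum>i\<in>S. (\<phi> i + a * M i t) * y i) = 0"
proof
  fix y assume y: "y \<in> cycles S T M"
  define s where "s = (\<Sum>i\<in>S. y i * M i t)"
  \<comment> \<open>Correct y along e0 so that it also lies in the kernel of column t.\<close>
  define y' where "y' i = y i + s * e0 i" for i
  have "(\<Sum>i\<in>S. y' i * M i j) = (\<Sum>i\<in>S. y i * M i j) + s * (\<Sum>i\<in>S. e0 i * M i j)" for j
    unfolding y'_def by (simp add: distrib_right sum.distrib sum_distrib_left mult.assoc)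
  then have "y' \<in> cycles S (insert t T) M"
    using y e0 by (auto simp: cycles_iff_sums vecs_def y'_def s_def)
  then have "(\<Sum>i\<in>S. \<phi> i * y' i) = 0"
    using vanish by blast
  moreover have "(\<Sum>i\<in>S. \<phi> i * y' i) = (\<Sum>i\<in>S. \<phi> i * y i) + s * a"
    unfolding y'_def a by (simp add: distrib_left sum.distrib sum_distrib_left mult_ac)
  moreover have "(\<Sum>i\<in>S. (\<phi> i + a * M i t) * y i) = (\<Sum>i\<in>S. \<phi> i * y i) + a * s"
    unfolding s_def distrib_right sum.distrib sum_distrib_left by (simp add: mult_ac)
  ultimately show "(\<Sum>i\<in>S. (\<phi> i + a * M i t) * y i) = 0"
    by (simp add: mult.commute)
qed

lemma functional_vanishing_on_cycles_factors:
  fixes M :: "'i \<Rightarrow> 'j \<Rightarrow> bit"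
  assumes "finite S" "finite T" and "\<forall>y\<in>cycles S T M. (\<Sum>i\<in>S. \<phi> i * y i) = 0"
  shows "\<exists>\<psi>. \<forall>i\<in>S. \<phi> i = (\<Sum>j\<in>T. \<psi> j * M i j)"
  using assms(2,3)
proof (induction T arbitrary: \<phi> rule: finite_induct)
  case empty
  have "\<phi> i = 0" if "i \<in> S" for i
    using empty basis_vec_vecs[OF that] sum_mult_basis_vec[OF assms(1) that, of \<phi>] by simp
  then show ?case
    by simp
next
  case (insert t T \<phi>)
  have sum_insert: "(\<Sum>j\<in>insert t T. (\<psi>(t := c)) j * M i j) = c * M i t + (\<Sum>j\<in>T. \<psi> j * M i j)"
    for \<psi> c i
  proof -
    have "(\<Sum>j\<in>T. (\<psi>(t := c)) j * M i j) = (\<Sum>j\<in>T. \<psi> j * M i j)"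
      using insert.hyps by (intro sum.cong) auto
    then show ?thesis
      using insert.hyps by simp
  qed
  show ?case
  proof (cases "\<forall>y\<in>cycles S T M. (\<Sum>i\<in>S. y i * M i t) = 0")
    case True
    then have "cycles S T M \<subseteq> cycles S (insert t T) M"
      by (auto simp: cycles_iff_sums)
    then obtain \<psi> where "\<forall>i\<in>S. \<phi> i = (\<Sum>j\<in>T. \<psi> j * M i j)"
      using insert.IH insert.prems by blast
    then have "\<forall>i\<in>S. \<phi> i = (\<Sum>j\<in>insert t T. (\<psi>(t := 0)) j * M i j)"
      by (simp only: sum_insert) simp
    then show ?thesis
      by blast
  next
    case False
    then obtain e0 where e0: "e0 \<in> cycles S T M" "(\<Sum>i\<in>S. e0 i * M i t) = 1"
      by auto
    define a where "a = (\<Sum>i\<in>S. \<phi> i * e0 i)"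
    obtain \<psi> where \<psi>: "\<forall>i\<in>S. \<phi> i + a * M i t = (\<Sum>j\<in>T. \<psi> j * M i j)"
      using insert.IH[OF functional_vanishing_on_cycles_shift[OF e0 insert.prems a_def]] by blast
    have "\<forall>i\<in>S. \<phi> i = (\<Sum>j\<in>insert t T. (\<psi>(t := a)) j * M i j)"
      using \<psi> by (simp only: sum_insert) (simp add: bit_add_eq_iff)
    then show ?thesis
      by blast
  qed
qed

locale fiber_bundle =
  fixes I1 :: "'b1 set" and I0 :: "'b0 set" and K1 :: "'k1 set" and K0 :: "'k0 set"
    and dB :: "'b1 \<Rightarrow> 'b0 \<Rightarrow> bit" and dF :: "'k1 \<Rightarrow> 'k0 \<Rightarrow> bit"
    and phi :: "'b1 \<Rightarrow> 'b0 \<Rightarrow> ('k1 \<Rightarrow> 'k1 \<Rightarrow> bit) \<times> ('k0 \<Rightarrow> 'k0 \<Rightarrow> bit)"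
    and eps :: "'k0 \<Rightarrow> bit"
  assumes fin: "finite I1" "finite I0" "finite K1" "finite K0"
    and conn: "is_connection I1 I0 dB K1 K0 dF phi"
    and triv_H0: "\<forall>b1\<in>I1. \<forall>b0\<in>I0. dB b1 b0 \<noteq> 0 \<longrightarrow>
          induces_identity_on_homology K1 K0 ({} :: unit set) dF (\<lambda>_ _. 0) (snd (phi b1 b0))"
    and triv_H1: "\<forall>b1\<in>I1. \<forall>b0\<in>I0. dB b1 b0 \<noteq> 0 \<longrightarrow>
          induces_identity_on_homology ({} :: unit set) K1 K0 (\<lambda>_ _. 0) dF (fst (phi b1 b0))"
    and aug: "\<forall>v\<in>vecs K1. mat_app K0 (UNIV :: unit set) (\<lambda>k _. eps k) (mat_app K1 K0 dF v) = (\<lambda>_. 0)"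
    and aug_iso: "induces_homology_iso K1 K0 ({} :: unit set) dF (\<lambda>_ _. 0)
          ({} :: unit set) (UNIV :: unit set) ({} :: unit set) (\<lambda>_ _. 0) (\<lambda>_ _. 0) (\<lambda>k _. eps k)"
    and H0B: "cycles I0 ({} :: unit set) (\<lambda>_ _. 0) \<subseteq> bounds I1 I0 dB"
begin

abbreviation "C1 \<equiv> tot_C1 I1 I0 K1 K0"
abbreviation "d2 \<equiv> tot_d2 dB dF phi"
abbreviation "d1 \<equiv> tot_d1 dB dF phi"
abbreviation "g0 b1 b0 \<equiv> snd (phi b1 b0)"
abbreviation "g1 b1 b0 \<equiv> fst (phi b1 b0)"

abbreviation Inl_part :: "(('b1 \<times> 'k0) + ('b0 \<times> 'k1) \<Rightarrow> bit) \<Rightarrow> 'b1 \<Rightarrow> 'k0 \<Rightarrow> bit" where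
  "Inl_part x b1 \<equiv> (\<lambda>k. x (Inl (b1, k)))"

abbreviation Inr_part :: "(('b1 \<times> 'k0) + ('b0 \<times> 'k1) \<Rightarrow> bit) \<Rightarrow> 'b0 \<Rightarrow> 'k1 \<Rightarrow> bit" where
  "Inr_part x b0 \<equiv> (\<lambda>k. x (Inr (b0, k)))"

abbreviation slice :: "('b \<times> 'k \<Rightarrow> bit) \<Rightarrow> 'b \<Rightarrow> 'k \<Rightarrow> bit" where
  "slice z b \<equiv> (\<lambda>k. z (b, k))"

lemma Inl_in_C1 [simp]: "Inl (b1, k0) \<in> C1 \<longleftrightarrow> b1 \<in> I1 \<and> k0 \<in> K0"
  by (auto simp: tot_C1_def)

lemma Inr_in_C1 [simp]: "Inr (b0, k1) \<in> C1 \<longleftrightarrow> b0 \<in> I0 \<and> k1 \<in> K1"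
  by (auto simp: tot_C1_def)

lemma Inl_part_vecs: "x \<in> vecs C1 \<Longrightarrow> Inl_part x b1 \<in> vecs K0"
  by (auto simp: vecs_def tot_C1_def)

lemma Inr_part_vecs: "x \<in> vecs C1 \<Longrightarrow> Inr_part x b0 \<in> vecs K1"
  by (auto simp: vecs_def tot_C1_def)

lemma slice_vecs: "z \<in> vecs (I \<times> K) \<Longrightarrow> slice z b \<in> vecs K"
  by (auto simp: vecs_def)

lemma sum_C1:
  "(\<Sum>c\<in>C1. f c) = (\<Sum>b1\<in>I1. \<Sum>k0\<in>K0. f (Inl (b1, k0))) + (\<Sum>b0\<in>I0. \<Sum>k1\<in>K1. f (Inr (b0, k1)))"
proof -
  have "(\<Sum>c\<in>C1. f c) = (\<Sum>c\<in>Inl ` (I1 \<times> K0). f c) + (\<Sum>c\<in>Inr ` (I0 \<times> K1). f c)"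
    unfolding tot_C1_def using fin by (intro sum.union_disjoint) auto
  also have "\<dots> = (\<Sum>p\<in>I1 \<times> K0. f (Inl p)) + (\<Sum>p\<in>I0 \<times> K1. f (Inr p))"
    by (simp add: sum.reindex)
  finally show ?thesis
    by (simp add: sum.cartesian_product')
qed

subsection \<open>The fibre F\<close>

definition augmentation :: "('k0 \<Rightarrow> bit) \<Rightarrow> bit" where
  "augmentation w = (\<Sum>k\<in>K0. w k * eps k)"

lemma mat_app_eps: "mat_app K0 (UNIV :: unit set) (\<lambda>k _. eps k) w = (\<lambda>_. augmentation w)"
  by (rule ext) (simp add: mat_app_def augmentation_def)

lemma augmentation_add: "augmentation (\<lambda>k. a k + b k) = augmentation a + augmentation b"
  by (simp add: augmentation_def sum.distrib distrib_right)

lemma augmentation_scale: "augmentation (\<lambda>k. c * a k) = c * augmentation a"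
  by (simp add: augmentation_def sum_distrib_left mult.assoc)

lemma augmentation_sum: "augmentation (\<lambda>k. \<Sum>i\<in>A. f i k) = (\<Sum>i\<in>A. augmentation (f i))"
  unfolding augmentation_def sum_distrib_right by (rule sum.swap)

lemma augmentation_zero [simp]: "augmentation (\<lambda>_. 0) = 0"
  by (simp add: augmentation_def)

lemma augmentation_basis_vec: "k \<in> K0 \<Longrightarrow> augmentation (basis_vec k) = eps k"
  unfolding augmentation_def using fin by (simp add: sum_basis_vec_mult)

lemma augmentation_dF: "v \<in> vecs K1 \<Longrightarrow> augmentation (mat_app K1 K0 dF v) = 0"
  using aug fun_cong[of _ _ "()"] by (fastforce simp: mat_app_eps)

lemma augmentation_dF_row: "k1 \<in> K1 \<Longrightarrow> (\<Sum>k\<in>K0. dF k1 k * eps k) = 0"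
  using augmentation_dF[OF basis_vec_vecs, of k1] fin
  by (simp add: augmentation_def mat_app_basis_vec cong: sum.cong)

lemma exists_augmentation_one: "\<exists>e\<in>vecs K0. augmentation e = 1"
proof -
  have "(\<lambda>_. 1) \<in> cycles (UNIV :: unit set) ({} :: unit set) (\<lambda>_ _. 0)"
    by (simp add: vecs_def)
  then obtain y where "y \<in> vecs K0" "(\<lambda>j. mat_app K0 (UNIV :: unit set) (\<lambda>k _. eps k) y j - 1) = (\<lambda>_. 0)"
    using aug_iso unfolding induces_homology_iso_def by fastforce
  then show ?thesis
    by (auto simp: mat_app_eps fun_eq_iff bit_add_eq_0_iff)
qed

definition eps_section :: "'k0 \<Rightarrow> bit" where
  "eps_section = (SOME e. e \<in> vecs K0 \<and> augmentation e = 1)"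

lemma eps_section: "eps_section \<in> vecs K0" "augmentation eps_section = 1"
  using someI_ex[of "\<lambda>e. e \<in> vecs K0 \<and> augmentation e = 1"] exists_augmentation_one
  unfolding eps_section_def by auto

lemma boundary_if_augmentation_zero:
  assumes "y \<in> vecs K0" "augmentation y = 0"
  shows "\<exists>a\<in>vecs K1. y = mat_app K1 K0 dF a"
proof -
  have "y \<in> bounds K1 K0 dF"
    using aug_iso assms unfolding induces_homology_iso_def by (simp add: mat_app_eps)
  then show ?thesis
    by (auto simp: bounds_def)
qed

lemma cocycle_eq_multiple_of_eps:
  assumes l: "\<forall>k1\<in>K1. (\<Sum>k\<in>K0. dF k1 k * l k) = 0" and k: "k \<in> K0"
  shows "l k = (\<Sum>k'\<in>K0. l k' * eps_section k') * eps k"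
proof -
  have vanish: "(\<Sum>i\<in>K0. l i * mat_app K1 K0 dF a i) = 0" for a
    using l by (simp add: sum_mult_mat_app[symmetric] mult.commute)
  let ?y = "\<lambda>i. basis_vec k i + eps k * eps_section i"
  have "?y \<in> vecs K0"
    using eps_section(1) k by (auto simp: vecs_def basis_vec_def)
  moreover have "augmentation ?y = 0"
    using k eps_section(2) by (simp add: augmentation_add augmentation_scale augmentation_basis_vec)
  ultimately obtain a where "?y = mat_app K1 K0 dF a"
    using boundary_if_augmentation_zero by blast
  then have "0 = (\<Sum>i\<in>K0. l i * ?y i)"
    using vanish by metis
  also have "\<dots> = l k + eps k * (\<Sum>i\<in>K0. l i * eps_section i)"
    using k fin by (simp add: distrib_left sum.distrib sum_distrib_left sum_mult_basis_vec mult_ac)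
  finally show ?thesis
    by (metis bit_add_eq_0_iff mult.commute)
qed

lemma fiber_aut0_mod_boundary:
  assumes "b1 \<in> I1" "b0 \<in> I0" "dB b1 b0 \<noteq> 0" "y \<in> vecs K0"
  shows "\<exists>h\<in>vecs K1. mat_app K0 K0 (g0 b1 b0) y = (\<lambda>j. y j + mat_app K1 K0 dF h j)"
proof -
  have "(\<lambda>j. mat_app K0 K0 (g0 b1 b0) y j - y j) \<in> bounds K1 K0 dF"
    using triv_H0 assms unfolding induces_identity_on_homology_def by auto
  then obtain h where "h \<in> vecs K1" "(\<lambda>j. mat_app K0 K0 (g0 b1 b0) y j + y j) = mat_app K1 K0 dF h"
    by (auto simp: bounds_def)
  then show ?thesis
    by (auto simp: fun_eq_iff bit_add_eq_iff)
qed

lemma augmentation_fiber_aut0: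
  assumes "b1 \<in> I1" "b0 \<in> I0" "dB b1 b0 \<noteq> 0" "y \<in> vecs K0"
  shows "augmentation (mat_app K0 K0 (g0 b1 b0) y) = augmentation y"
proof -
  obtain h where "h \<in> vecs K1" "mat_app K0 K0 (g0 b1 b0) y = (\<lambda>j. y j + mat_app K1 K0 dF h j)"
    using fiber_aut0_mod_boundary[OF assms] by blast
  then show ?thesis
    by (simp add: augmentation_add augmentation_dF)
qed

lemma augmentation_fiber_aut0_row:
  assumes "b1 \<in> I1" "b0 \<in> I0" "dB b1 b0 \<noteq> 0" "k0 \<in> K0"
  shows "(\<Sum>k\<in>K0. g0 b1 b0 k0 k * eps k) = eps k0"
proof -
  have "(\<Sum>k\<in>K0. g0 b1 b0 k0 k * eps k) = augmentation (mat_app K0 K0 (g0 b1 b0) (basis_vec k0))"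
    unfolding augmentation_def using assms fin by (intro sum.cong) (auto simp: mat_app_basis_vec)
  also have "\<dots> = eps k0"
    using assms by (simp add: augmentation_fiber_aut0 basis_vec_vecs augmentation_basis_vec)
  finally show ?thesis .
qed

lemma fiber_aut1_fixes_cycles:
  assumes "b1 \<in> I1" "b0 \<in> I0" "dB b1 b0 \<noteq> 0" "y \<in> cycles K1 K0 dF"
  shows "mat_app K1 K1 (g1 b1 b0) y = y"
proof -
  have "(\<lambda>j. mat_app K1 K1 (g1 b1 b0) y j - y j) = (\<lambda>_. 0)"
    using triv_H1 assms unfolding induces_identity_on_homology_def by auto
  then show ?thesis
    by (auto simp: fun_eq_iff bit_add_eq_0_iff)
qed

lemma fiber_aut_chain_map:
  "b1 \<in> I1 \<Longrightarrow> b0 \<in> I0 \<Longrightarrow> dB b1 b0 \<noteq> 0 \<Longrightarrow> v \<in> vecs K1 \<Longrightarrow>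
    mat_app K1 K0 dF (mat_app K1 K1 (g1 b1 b0) v) = mat_app K0 K0 (g0 b1 b0) (mat_app K1 K0 dF v)"
  using conn unfolding is_connection_def chain_aut_def by auto

subsection \<open>The base B\<close>

lemma dB_right_inverse:
  "\<exists>c. \<forall>b0\<in>I0. c b0 \<in> vecs I1 \<and> (\<forall>b\<in>I0. mat_app I1 I0 dB (c b0) b = basis_vec b0 b)"
proof -
  have "\<forall>b0\<in>I0. \<exists>c\<in>vecs I1. basis_vec b0 = mat_app I1 I0 dB c"
    using H0B basis_vec_vecs by (fastforce simp: bounds_def)
  then obtain c where "\<forall>b0\<in>I0. c b0 \<in> vecs I1 \<and> basis_vec b0 = mat_app I1 I0 dB (c b0)"
    by (metis bchoice)
  then show ?thesis
    by (intro exI[of _ c]) simp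
qed

lemma transp_dB_injective:
  assumes "\<forall>b1\<in>I1. (\<Sum>b\<in>I0. dB b1 b * t b) = 0" "b0 \<in> I0"
  shows "t b0 = 0"
proof -
  obtain c where c: "\<forall>b\<in>I0. mat_app I1 I0 dB c b = basis_vec b0 b"
    using dB_right_inverse assms(2) by blast
  have "t b0 = (\<Sum>b\<in>I0. mat_app I1 I0 dB c b * t b)"
    using assms(2) fin c by (simp add: sum_basis_vec_mult)
  also have "\<dots> = (\<Sum>b1\<in>I1. c b1 * (\<Sum>b\<in>I0. t b * dB b1 b))"
    by (simp add: sum_mult_mat_app mult.commute)
  finally show ?thesis
    using assms(1) by (simp add: mult.commute)
qed

subsection \<open>The total complex\<close>

lemma tot_d2_Inl:
  assumes "b1 \<in> I1"
  shows "mat_app (I1 \<times> K1) C1 d2 z (Inl (b1, k0)) = mat_app K1 K0 dF (slice z b1) k0"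
proof (cases "k0 \<in> K0")
  case True
  have "mat_app (I1 \<times> K1) C1 d2 z (Inl (b1, k0))
      = (\<Sum>b1'\<in>I1. \<Sum>k1\<in>K1. z (b1', k1) * d2 (b1', k1) (Inl (b1, k0)))"
    using True assms by (simp add: mat_app_in tot_C1_def sum.cartesian_product')
  also have "\<dots> = (\<Sum>b1'\<in>I1. if b1' = b1 then mat_app K1 K0 dF (slice z b1) k0 else 0)"
    using True by (intro sum.cong) (auto simp: mat_app_in)
  finally show ?thesis
    using assms fin by simp
qed (simp add: mat_app_out)

lemma tot_d2_Inr:
  assumes "b0 \<in> I0"
  shows "mat_app (I1 \<times> K1) C1 d2 z (Inr (b0, k1))
    = (\<Sum>b1\<in>I1. dB b1 b0 * mat_app K1 K1 (g1 b1 b0) (slice z b1) k1)"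
proof (cases "k1 \<in> K1")
  case True
  then show ?thesis
    using assms by (auto simp: mat_app_in tot_C1_def sum.cartesian_product' sum_distrib_left mult_ac intro!: sum.cong)
qed (simp add: mat_app_out)

lemma tot_d1_app:
  assumes "b0 \<in> I0"
  shows "mat_app C1 (I0 \<times> K0) d1 x (b0, k0)
    = (\<Sum>b1\<in>I1. dB b1 b0 * mat_app K0 K0 (g0 b1 b0) (Inl_part x b1) k0)
      + mat_app K1 K0 dF (Inr_part x b0) k0"
proof (cases "k0 \<in> K0")
  case True
  have "(\<Sum>b0'\<in>I0. \<Sum>k1\<in>K1. x (Inr (b0', k1)) * d1 (Inr (b0', k1)) (b0, k0))
      = (\<Sum>b0'\<in>I0. if b0' = b0 then mat_app K1 K0 dF (Inr_part x b0) k0 else 0)"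
    using True by (intro sum.cong) (auto simp: mat_app_in)
  then show ?thesis
    using True assms fin
    by (simp add: mat_app_in sum_C1 sum_distrib_left mult_ac)
qed (simp add: mat_app_out)

lemma pi_lower_app:
  assumes "b1 \<in> I1"
  shows "mat_app C1 I1 (pi_lower eps) x b1 = augmentation (Inl_part x b1)"
proof -
  have "(\<Sum>b1'\<in>I1. \<Sum>k\<in>K0. x (Inl (b1', k)) * pi_lower eps (Inl (b1', k)) b1)
      = (\<Sum>b1'\<in>I1. if b1' = b1 then augmentation (Inl_part x b1) else 0)"
    by (intro sum.cong) (auto simp: augmentation_def)
  then show ?thesis
    using assms fin by (simp add: mat_app_in sum_C1)
qed

lemma transp_tot_d1_Inl:
  "b1 \<in> I1 \<Longrightarrow> k0 \<in> K0 \<Longrightarrow> mat_app (I0 \<times> K0) C1 (transp d1) V (Inl (b1, k0))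
    = (\<Sum>b0\<in>I0. dB b1 b0 * (\<Sum>k\<in>K0. V (b0, k) * g0 b1 b0 k0 k))"
  by (auto simp: mat_app_in tot_C1_def transp_def sum.cartesian_product' sum_distrib_left mult_ac intro!: sum.cong)

lemma transp_tot_d1_Inr:
  assumes "b0 \<in> I0" "k1 \<in> K1"
  shows "mat_app (I0 \<times> K0) C1 (transp d1) V (Inr (b0, k1)) = (\<Sum>k\<in>K0. V (b0, k) * dF k1 k)"
proof -
  have "mat_app (I0 \<times> K0) C1 (transp d1) V (Inr (b0, k1))
      = (\<Sum>b0'\<in>I0. if b0 = b0' then (\<Sum>k\<in>K0. V (b0, k) * dF k1 k) else 0)"
    using assms by (auto simp: mat_app_in tot_C1_def sum.cartesian_product' transp_def intro!: sum.cong)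
  then show ?thesis
    using assms fin by simp
qed

lemma transp_tot_d2_app:
  assumes "b1 \<in> I1" "k1 \<in> K1"
  shows "mat_app C1 (I1 \<times> K1) (transp d2) \<psi> (b1, k1)
    = (\<Sum>k\<in>K0. \<psi> (Inl (b1, k)) * dF k1 k)
      + (\<Sum>b0\<in>I0. dB b1 b0 * (\<Sum>k\<in>K1. \<psi> (Inr (b0, k)) * g1 b1 b0 k1 k))"
proof -
  have "(\<Sum>b1'\<in>I1. \<Sum>k\<in>K0. \<psi> (Inl (b1', k)) * transp d2 (Inl (b1', k)) (b1, k1))
      = (\<Sum>b1'\<in>I1. if b1 = b1' then (\<Sum>k\<in>K0. \<psi> (Inl (b1, k)) * dF k1 k) else 0)"
    by (intro sum.cong) (auto simp: transp_def)
  then show ?thesis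
    using assms fin
    by (simp add: mat_app_in sum_C1 transp_def sum_distrib_left mult_ac)
qed

lemma pi_upper_Inl:
  assumes "b1 \<in> I1" "k0 \<in> K0"
  shows "mat_app I1 C1 (pi_upper eps) \<beta> (Inl (b1, k0)) = \<beta> b1 * eps k0"
proof -
  have "mat_app I1 C1 (pi_upper eps) \<beta> (Inl (b1, k0)) = (\<Sum>b\<in>I1. if b = b1 then \<beta> b1 * eps k0 else 0)"
    using assms by (auto simp: mat_app_in tot_C1_def intro!: sum.cong)
  then show ?thesis
    using assms fin by simp
qed

lemma pi_upper_Inr [simp]: "mat_app I1 C1 (pi_upper eps) \<beta> (Inr p) = 0"
  by (cases "Inr p \<in> C1") (auto simp: mat_app_in mat_app_out)

text \<open>The two contributions to d1 (d2 z) cancel because each phi b1 b0 is a chain map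
  and 2 = 0.\<close>

lemma tot_d1_tot_d2_zero:
  assumes z: "z \<in> vecs (I1 \<times> K1)"
  shows "mat_app C1 (I0 \<times> K0) d1 (mat_app (I1 \<times> K1) C1 d2 z) = (\<lambda>_. 0)"
proof (rule ext, clarify)
  fix b0 k0
  let ?y = "mat_app (I1 \<times> K1) C1 d2 z"
  show "mat_app C1 (I0 \<times> K0) d1 ?y (b0, k0) = 0"
  proof (cases "b0 \<in> I0")
    case True
    have Inl: "Inl_part ?y b1 = mat_app K1 K0 dF (slice z b1)" if "b1 \<in> I1" for b1
      using that by (simp add: tot_d2_Inl)
    have "mat_app K1 K0 dF (Inr_part ?y b0) k0
        = (\<Sum>b1\<in>I1. dB b1 b0 * mat_app K1 K0 dF (mat_app K1 K1 (g1 b1 b0) (slice z b1)) k0)"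
      using True by (simp add: tot_d2_Inr mat_app_sum mat_app_scale)
    moreover have "(\<Sum>b1\<in>I1. dB b1 b0 * mat_app K0 K0 (g0 b1 b0) (Inl_part ?y b1) k0)
        = (\<Sum>b1\<in>I1. dB b1 b0 * mat_app K1 K0 dF (mat_app K1 K1 (g1 b1 b0) (slice z b1)) k0)"
    proof (rule sum.cong)
      fix b1 assume b1: "b1 \<in> I1"
      show "dB b1 b0 * mat_app K0 K0 (g0 b1 b0) (Inl_part ?y b1) k0
          = dB b1 b0 * mat_app K1 K0 dF (mat_app K1 K1 (g1 b1 b0) (slice z b1)) k0"
        using fiber_aut_chain_map[OF b1 True _ slice_vecs[OF z]] Inl[OF b1]
        by (cases "dB b1 b0 = 0") auto
    qed simp
    ultimately show ?thesis
      using True by (simp add: tot_d1_app)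
  qed (simp add: mat_app_out)
qed

lemma transp_tot_d2_transp_tot_d1_zero:
  "mat_app C1 (I1 \<times> K1) (transp d2) (mat_app (I0 \<times> K0) C1 (transp d1) w) = (\<lambda>_. 0)"
  using transp_comp_zero[of "I1 \<times> K1" C1 "I0 \<times> K0" d1 d2] fin tot_d1_tot_d2_zero by blast

subsection \<open>pi_* on H_1\<close>

lemma pi_lower_cycles:
  assumes x: "x \<in> cycles C1 (I0 \<times> K0) d1"
  shows "mat_app C1 I1 (pi_lower eps) x \<in> cycles I1 I0 dB"
proof -
  have "mat_app I1 I0 dB (mat_app C1 I1 (pi_lower eps) x) b0 = 0" if b0: "b0 \<in> I0" for b0
  proof -
    have "0 = augmentation (\<lambda>k0. mat_app C1 (I0 \<times> K0) d1 x (b0, k0))"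
      using x by (simp add: cycles_def)
    also have "\<dots> = (\<Sum>b1\<in>I1. dB b1 b0 * augmentation (mat_app K0 K0 (g0 b1 b0) (Inl_part x b1)))
        + augmentation (mat_app K1 K0 dF (Inr_part x b0))"
      by (simp add: tot_d1_app[OF b0] augmentation_add augmentation_sum augmentation_scale)
    also have "\<dots> = (\<Sum>b1\<in>I1. dB b1 b0 * augmentation (Inl_part x b1))"
    proof -
      have xv: "x \<in> vecs C1"
        using x by (simp add: cycles_def)
      have "dB b1 b0 * augmentation (mat_app K0 K0 (g0 b1 b0) (Inl_part x b1))
          = dB b1 b0 * augmentation (Inl_part x b1)" if "b1 \<in> I1" for b1
        using augmentation_fiber_aut0[OF that b0 _ Inl_part_vecs[OF xv]] by (cases "dB b1 b0 = 0") auto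
      then have "(\<Sum>b1\<in>I1. dB b1 b0 * augmentation (mat_app K0 K0 (g0 b1 b0) (Inl_part x b1)))
          = (\<Sum>b1\<in>I1. dB b1 b0 * augmentation (Inl_part x b1))"
        by (rule sum.cong[OF refl])
      then show ?thesis
        using xv by (simp add: augmentation_dF Inr_part_vecs)
    qed
    also have "\<dots> = mat_app I1 I0 dB (mat_app C1 I1 (pi_lower eps) x) b0"
      unfolding mat_app_in[OF b0] by (auto simp: pi_lower_app mult.commute intro!: sum.cong)
    finally show ?thesis ..
  qed
  then show ?thesis
    by (auto simp: cycles_iff_sums mat_app_in)
qed

lemma pi_lower_bounds:
  assumes "y \<in> bounds (I1 \<times> K1) C1 d2"
  shows "mat_app C1 I1 (pi_lower eps) y \<in> bounds ({} :: unit set) I1 (\<lambda>_ _. 0)"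
proof -
  obtain z where z: "z \<in> vecs (I1 \<times> K1)" "y = mat_app (I1 \<times> K1) C1 d2 z"
    using assms by (auto simp: bounds_def)
  have "mat_app C1 I1 (pi_lower eps) y b1 = 0" for b1
    using z by (cases "b1 \<in> I1") (simp_all add: pi_lower_app tot_d2_Inl augmentation_dF slice_vecs mat_app_out)
  then show ?thesis
    by auto
qed

lemma pi_lower_surj:
  assumes z: "z \<in> cycles I1 I0 dB"
  shows "\<exists>x\<in>cycles C1 (I0 \<times> K0) d1.
    (\<lambda>j. mat_app C1 I1 (pi_lower eps) x j - z j) \<in> bounds ({} :: unit set) I1 (\<lambda>_ _. 0)"
proof -
  let ?e = eps_section
  have zv: "z \<in> vecs I1" and zc: "\<forall>b0\<in>I0. (\<Sum>b1\<in>I1. z b1 * dB b1 b0) = 0"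
    using z by (auto simp: cycles_iff_sums)
  define h where "h b1 b0 = (SOME h. h \<in> vecs K1 \<and>
    mat_app K0 K0 (g0 b1 b0) ?e = (\<lambda>j. ?e j + mat_app K1 K0 dF h j))" for b1 b0
  have h: "mat_app K0 K0 (g0 b1 b0) ?e = (\<lambda>j. ?e j + mat_app K1 K0 dF (h b1 b0) j)"
    if "b1 \<in> I1" "b0 \<in> I0" "dB b1 b0 \<noteq> 0" for b1 b0
    using someI_ex[OF fiber_aut0_mod_boundary[OF that eps_section(1), unfolded Bex_def]]
    unfolding h_def by blast
  \<comment> \<open>The lift z \<otimes> e of z is corrected in B_0 \<otimes> F_1 by the homotopies h, which move
    g0 e back to e.\<close>
  define x where "x = case_sum (\<lambda>(b1, k0). z b1 * ?e k0)
    (\<lambda>(b0, k1). if b0 \<in> I0 \<and> k1 \<in> K1 then (\<Sum>b1\<in>I1. dB b1 b0 * z b1 * h b1 b0 k1) else 0)"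
  have "x \<in> vecs C1"
    using zv eps_section(1) by (auto simp: vecs_def x_def tot_C1_def split: sum.split)
  moreover have "mat_app C1 (I0 \<times> K0) d1 x (b0, k0) = 0" if b0: "b0 \<in> I0" for b0 k0
  proof -
    let ?H = "\<Sum>b1\<in>I1. dB b1 b0 * z b1 * mat_app K1 K0 dF (h b1 b0) k0"
    have "(\<Sum>b1\<in>I1. dB b1 b0 * mat_app K0 K0 (g0 b1 b0) (Inl_part x b1) k0)
        = (\<Sum>b1\<in>I1. z b1 * dB b1 b0 * ?e k0 + dB b1 b0 * z b1 * mat_app K1 K0 dF (h b1 b0) k0)"
    proof (rule sum.cong)
      fix b1 assume b1: "b1 \<in> I1"
      show "dB b1 b0 * mat_app K0 K0 (g0 b1 b0) (Inl_part x b1) k0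
          = z b1 * dB b1 b0 * ?e k0 + dB b1 b0 * z b1 * mat_app K1 K0 dF (h b1 b0) k0"
        using h[OF b1 b0] by (cases "dB b1 b0 = 0") (simp_all add: x_def mat_app_scale distrib_left mult_ac)
    qed simp
    also have "\<dots> = (\<Sum>b1\<in>I1. z b1 * dB b1 b0) * ?e k0 + ?H"
      by (simp add: sum.distrib sum_distrib_right)
    finally have Inl: "(\<Sum>b1\<in>I1. dB b1 b0 * mat_app K0 K0 (g0 b1 b0) (Inl_part x b1) k0) = ?H"
      using zc b0 by simp
    have "mat_app K1 K0 dF (Inr_part x b0) = mat_app K1 K0 dF (\<lambda>k. \<Sum>b1\<in>I1. dB b1 b0 * z b1 * h b1 b0 k)"
      by (rule mat_app_cong) (simp add: x_def b0)
    then have Inr: "mat_app K1 K0 dF (Inr_part x b0) k0 = ?H"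
      by (simp add: mat_app_sum mat_app_scale)
    show ?thesis
      using b0 by (simp add: tot_d1_app Inl Inr)
  qed
  then have "mat_app C1 (I0 \<times> K0) d1 x = (\<lambda>_. 0)"
    unfolding fun_eq_iff by (metis mat_app_out mem_Sigma_iff prod.collapse)
  moreover have "mat_app C1 I1 (pi_lower eps) x b1 = z b1" for b1
    using zv eps_section(2)
    by (cases "b1 \<in> I1") (simp_all add: pi_lower_app x_def augmentation_scale mat_app_out vecsD)
  ultimately show ?thesis
    by (auto simp: cycles_def)
qed

lemma d2_lift_of_fibre_cycles:
  assumes w: "\<And>b0. b0 \<in> I0 \<Longrightarrow> w b0 \<in> cycles K1 K0 dF"
  obtains y where "y \<in> vecs (I1 \<times> K1)"
    and "\<And>b1 k0. b1 \<in> I1 \<Longrightarrow> mat_app (I1 \<times> K1) C1 d2 y (Inl (b1, k0)) = 0"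
    and "\<And>b0 k1. b0 \<in> I0 \<Longrightarrow> k1 \<in> K1 \<Longrightarrow> mat_app (I1 \<times> K1) C1 d2 y (Inr (b0, k1)) = w b0 k1"
proof -
  obtain c where c: "\<forall>b0\<in>I0. c b0 \<in> vecs I1 \<and> (\<forall>b\<in>I0. mat_app I1 I0 dB (c b0) b = basis_vec b0 b)"
    using dB_right_inverse by blast
  \<comment> \<open>Since dB (c b0) = b0 and the phi fix the cycles of F, d2 maps c b0 \<otimes> w b0 to
    b0 \<otimes> w b0.\<close>
  define y where "y = (\<lambda>(b1, k1). \<Sum>b0\<in>I0. c b0 b1 * w b0 k1)"
  have "y \<in> vecs (I1 \<times> K1)"
  proof (rule vecsI)
    fix p :: "'b1 \<times> 'k1"
    obtain b1 k1 where p: "p = (b1, k1)"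
      by fastforce
    assume "p \<notin> I1 \<times> K1"
    then have "c b0 b1 * w b0 k1 = 0" if "b0 \<in> I0" for b0
      using that c w[OF that] by (auto simp: cycles_def vecs_def p)
    then show "y p = 0"
      unfolding y_def p by (simp add: sum.neutral)
  qed
  moreover have "mat_app (I1 \<times> K1) C1 d2 y (Inl (b1, k0)) = 0" if "b1 \<in> I1" for b1 k0
    using that w by (simp add: tot_d2_Inl y_def mat_app_sum mat_app_scale cycles_def)
  moreover have "mat_app (I1 \<times> K1) C1 d2 y (Inr (b0, k1)) = w b0 k1"
    if b0: "b0 \<in> I0" and k1: "k1 \<in> K1" for b0 k1
  proof -
    have "dB b1 b0 * mat_app K1 K1 (g1 b1 b0) (slice y b1) k1 = (\<Sum>b0'\<in>I0. c b0' b1 * dB b1 b0 * w b0' k1)"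
      if b1: "b1 \<in> I1" for b1
    proof (cases "dB b1 b0 = 0")
      case False
      then show ?thesis
        using fiber_aut1_fixes_cycles[OF b1 b0 False w] by (simp add: y_def mat_app_sum mat_app_scale)
    qed simp
    then have "mat_app (I1 \<times> K1) C1 d2 y (Inr (b0, k1)) = (\<Sum>b1\<in>I1. \<Sum>b0'\<in>I0. c b0' b1 * dB b1 b0 * w b0' k1)"
      unfolding tot_d2_Inr[OF b0] by (rule sum.cong[OF refl])
    also have "\<dots> = (\<Sum>b0'\<in>I0. mat_app I1 I0 dB (c b0') b0 * w b0' k1)"
      using b0 by (subst sum.swap) (simp add: mat_app_in sum_distrib_right)
    also have "\<dots> = (\<Sum>b0'\<in>I0. basis_vec b0 b0' * w b0' k1)"
      using b0 c by (auto simp: basis_vec_def intro!: sum.cong)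
    also have "\<dots> = w b0 k1"
      using b0 fin by (simp add: sum_basis_vec_mult)
    finally show ?thesis .
  qed
  ultimately show ?thesis
    using that by blast
qed

lemma boundary_if_Inl_part_zero:
  assumes x: "x \<in> cycles C1 (I0 \<times> K0) d1" and Inl0: "\<And>b1 k. b1 \<in> I1 \<Longrightarrow> x (Inl (b1, k)) = 0"
  shows "x \<in> bounds (I1 \<times> K1) C1 d2"
proof -
  have xv: "x \<in> vecs C1"
    using x by (simp add: cycles_def)
  have "Inr_part x b0 \<in> cycles K1 K0 dF" if b0: "b0 \<in> I0" for b0
  proof -
    have "mat_app K1 K0 dF (Inr_part x b0) k0 = mat_app C1 (I0 \<times> K0) d1 x (b0, k0)" for k0
      using b0 Inl0 by (simp add: tot_d1_app)
    then show ?thesis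
      using x Inr_part_vecs[OF xv] by (simp add: cycles_def fun_eq_iff)
  qed
  then obtain y where y: "y \<in> vecs (I1 \<times> K1)"
    "\<And>b1 k0. b1 \<in> I1 \<Longrightarrow> mat_app (I1 \<times> K1) C1 d2 y (Inl (b1, k0)) = 0"
    "\<And>b0 k1. b0 \<in> I0 \<Longrightarrow> k1 \<in> K1 \<Longrightarrow> mat_app (I1 \<times> K1) C1 d2 y (Inr (b0, k1)) = x (Inr (b0, k1))"
    using d2_lift_of_fibre_cycles[of "Inr_part x"] by blast
  have "x p = mat_app (I1 \<times> K1) C1 d2 y p" for p
  proof (cases "p \<in> C1")
    case False
    then show ?thesis
      using xv by (simp add: mat_app_out vecsD)
  next
    case True
    then show ?thesis
      using y Inl0 by (auto simp: tot_C1_def)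
  qed
  with y(1) show ?thesis
    unfolding bounds_def by (auto simp: fun_eq_iff)
qed

lemma pi_lower_inj:
  assumes x: "x \<in> cycles C1 (I0 \<times> K0) d1"
    and px: "mat_app C1 I1 (pi_lower eps) x \<in> bounds ({} :: unit set) I1 (\<lambda>_ _. 0)"
  shows "x \<in> bounds (I1 \<times> K1) C1 d2"
proof -
  have xv: "x \<in> vecs C1" and xc: "mat_app C1 (I0 \<times> K0) d1 x = (\<lambda>_. 0)"
    using x by (auto simp: cycles_def)
  have "\<forall>b1\<in>I1. \<exists>a\<in>vecs K1. Inl_part x b1 = mat_app K1 K0 dF a"
  proof
    fix b1 assume b1: "b1 \<in> I1"
    have "augmentation (Inl_part x b1) = 0"
      using px pi_lower_app[OF b1, of x] by (auto dest: fun_cong[of _ _ b1])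
    then show "\<exists>a\<in>vecs K1. Inl_part x b1 = mat_app K1 K0 dF a"
      using boundary_if_augmentation_zero Inl_part_vecs[OF xv] by blast
  qed
  then obtain a where a: "\<forall>b1\<in>I1. a b1 \<in> vecs K1 \<and> Inl_part x b1 = mat_app K1 K0 dF (a b1)"
    by (metis bchoice)
  \<comment> \<open>Subtracting d2 of the lift a kills the B_1 \<otimes> F_0 part of x.\<close>
  define A where "A = (\<lambda>(b1, k1). if b1 \<in> I1 then a b1 k1 else 0)"
  have Av: "A \<in> vecs (I1 \<times> K1)"
    using a by (auto simp: vecs_def A_def)
  define x' where "x' = (\<lambda>p. x p + mat_app (I1 \<times> K1) C1 d2 A p)"
  have "x' \<in> cycles C1 (I0 \<times> K0) d1"
    using xv xc tot_d1_tot_d2_zero[OF Av]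
    by (auto simp: cycles_def x'_def vecs_def mat_app_out mat_app_add)
  moreover have "x' (Inl (b1, k)) = 0" if "b1 \<in> I1" for b1 k
  proof -
    have "slice A b1 = a b1"
      using that by (simp add: A_def)
    then show ?thesis
      using a that by (simp add: x'_def tot_d2_Inl fun_eq_iff)
  qed
  ultimately have "x' \<in> bounds (I1 \<times> K1) C1 d2"
    by (rule boundary_if_Inl_part_zero)
  moreover have "mat_app (I1 \<times> K1) C1 d2 A \<in> bounds (I1 \<times> K1) C1 d2"
    using Av by (simp add: bounds_def)
  ultimately have "(\<lambda>p. x' p + mat_app (I1 \<times> K1) C1 d2 A p) \<in> bounds (I1 \<times> K1) C1 d2"
    by (rule bounds_add)
  then show ?thesis
    by (simp add: x'_def add.assoc)
qed

subsection \<open>pi^* on H^1\<close>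

lemma pi_upper_cycles:
  "mat_app I1 C1 (pi_upper eps) \<beta> \<in> cycles C1 (I1 \<times> K1) (transp d2)"
proof -
  have "mat_app C1 (I1 \<times> K1) (transp d2) (mat_app I1 C1 (pi_upper eps) \<beta>) (b1, k1) = 0"
    if "b1 \<in> I1" "k1 \<in> K1" for b1 k1
  proof -
    have "mat_app C1 (I1 \<times> K1) (transp d2) (mat_app I1 C1 (pi_upper eps) \<beta>) (b1, k1)
        = \<beta> b1 * (\<Sum>k\<in>K0. dF k1 k * eps k)"
      using that by (simp add: transp_tot_d2_app pi_upper_Inl sum_distrib_left mult_ac)
    then show ?thesis
      using augmentation_dF_row[OF that(2)] by simp
  qed
  then show ?thesis
    by (auto simp: cycles_iff_sums mat_app_in)
qed

definition times_eps :: "('b0 \<Rightarrow> bit) \<Rightarrow> 'b0 \<times> 'k0 \<Rightarrow> bit" where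
  "times_eps v = (\<lambda>(b0, k). if k \<in> K0 then v b0 * eps k else 0)"

lemma times_eps_vecs: "v \<in> vecs I0 \<Longrightarrow> times_eps v \<in> vecs (I0 \<times> K0)"
  by (auto simp: vecs_def times_eps_def)

lemma transp_tot_d1_times_eps_Inl:
  assumes b1: "b1 \<in> I1" and k0: "k0 \<in> K0"
  shows "mat_app (I0 \<times> K0) C1 (transp d1) (times_eps v) (Inl (b1, k0))
    = mat_app I0 I1 (transp dB) v b1 * eps k0"
proof -
  have "dB b1 b0 * (\<Sum>k\<in>K0. times_eps v (b0, k) * g0 b1 b0 k0 k) = v b0 * dB b1 b0 * eps k0"
    if b0: "b0 \<in> I0" for b0
  proof -
    have "(\<Sum>k\<in>K0. times_eps v (b0, k) * g0 b1 b0 k0 k) = v b0 * (\<Sum>k\<in>K0. g0 b1 b0 k0 k * eps k)"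
      by (auto simp: times_eps_def sum_distrib_left mult_ac intro!: sum.cong)
    then show ?thesis
      using augmentation_fiber_aut0_row[OF b1 b0 _ k0] by (cases "dB b1 b0 = 0") (auto simp: mult_ac)
  qed
  then have "mat_app (I0 \<times> K0) C1 (transp d1) (times_eps v) (Inl (b1, k0))
      = (\<Sum>b0\<in>I0. v b0 * dB b1 b0 * eps k0)"
    unfolding transp_tot_d1_Inl[OF b1 k0] by (rule sum.cong[OF refl])
  then show ?thesis
    using b1 by (simp add: mat_app_in transp_def sum_distrib_right)
qed

lemma transp_tot_d1_times_eps_Inr:
  assumes "b0 \<in> I0" "k1 \<in> K1"
  shows "mat_app (I0 \<times> K0) C1 (transp d1) (times_eps v) (Inr (b0, k1)) = 0"
proof -
  have "(\<Sum>k\<in>K0. times_eps v (b0, k) * dF k1 k) = v b0 * (\<Sum>k\<in>K0. dF k1 k * eps k)"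
    by (auto simp: times_eps_def sum_distrib_left mult_ac intro!: sum.cong)
  then show ?thesis
    using assms by (simp add: transp_tot_d1_Inr augmentation_dF_row)
qed

lemma pi_upper_bounds:
  assumes "\<beta> \<in> bounds I0 I1 (transp dB)"
  shows "mat_app I1 C1 (pi_upper eps) \<beta> \<in> bounds (I0 \<times> K0) C1 (transp d1)"
proof -
  obtain v where v: "v \<in> vecs I0" "\<beta> = mat_app I0 I1 (transp dB) v"
    using assms by (auto simp: bounds_def)
  have "mat_app I1 C1 (pi_upper eps) \<beta> p = mat_app (I0 \<times> K0) C1 (transp d1) (times_eps v) p" for p
  proof (cases "p \<in> C1")
    case False
    then show ?thesis
      by (simp add: mat_app_out)
  next
    case True
    then consider (L) b1 k0 where "p = Inl (b1, k0)" "b1 \<in> I1" "k0 \<in> K0"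
      | (R) b0 k1 where "p = Inr (b0, k1)" "b0 \<in> I0" "k1 \<in> K1"
      by (auto simp: tot_C1_def)
    then show ?thesis
      by cases (simp_all add: v(2) pi_upper_Inl transp_tot_d1_times_eps_Inl transp_tot_d1_times_eps_Inr)
  qed
  then show ?thesis
    using times_eps_vecs[OF v(1)] unfolding bounds_def by (auto simp: fun_eq_iff)
qed

lemma exists_eps_one: "\<exists>k\<in>K0. eps k = 1"
proof (rule ccontr)
  assume "\<not> ?thesis"
  then have "augmentation eps_section = 0"
    by (simp add: augmentation_def)
  then show False
    using eps_section(2) by simp
qed

lemma cochain_eq_times_eps:
  assumes V: "V \<in> vecs (I0 \<times> K0)"
    and Inr0: "\<And>b0 k1. b0 \<in> I0 \<Longrightarrow> k1 \<in> K1 \<Longrightarrow> mat_app (I0 \<times> K0) C1 (transp d1) V (Inr (b0, k1)) = 0"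
  obtains v where "v \<in> vecs I0" "V = times_eps v"
proof
  define v where "v b0 = (if b0 \<in> I0 then (\<Sum>k\<in>K0. V (b0, k) * eps_section k) else 0)" for b0
  show "v \<in> vecs I0"
    by (auto simp: vecs_def v_def)
  have "V (b0, k) = times_eps v (b0, k)" for b0 k
  proof (cases "b0 \<in> I0 \<and> k \<in> K0")
    case True
    then have "(\<Sum>k\<in>K0. dF k1 k * V (b0, k)) = 0" if "k1 \<in> K1" for k1
      using transp_tot_d1_Inr[of b0 k1 V] Inr0[of b0 k1] that by (simp add: mult.commute)
    then show ?thesis
      using cocycle_eq_multiple_of_eps[of "\<lambda>k. V (b0, k)" k] True by (simp add: v_def times_eps_def)
  qed (use V in \<open>auto simp: times_eps_def v_def vecsD\<close>)
  then show "V = times_eps v"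
    by (simp add: fun_eq_iff)
qed

lemma pi_upper_inj:
  assumes b: "mat_app I1 C1 (pi_upper eps) \<beta> \<in> bounds (I0 \<times> K0) C1 (transp d1)"
    and \<beta>v: "\<beta> \<in> vecs I1"
  shows "\<beta> \<in> bounds I0 I1 (transp dB)"
proof -
  obtain V where V: "V \<in> vecs (I0 \<times> K0)"
    "mat_app I1 C1 (pi_upper eps) \<beta> = mat_app (I0 \<times> K0) C1 (transp d1) V"
    using b by (auto simp: bounds_def)
  obtain v where v: "v \<in> vecs I0" "V = times_eps v"
    using cochain_eq_times_eps[OF V(1)] V(2)[symmetric] by (metis pi_upper_Inr)
  obtain k_eps where k_eps: "k_eps \<in> K0" "eps k_eps = 1"
    using exists_eps_one by blast
  \<comment> \<open>Evaluate both sides of V(2) at b1 \<otimes> k_eps.\<close>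
  have "\<beta> b1 = mat_app I0 I1 (transp dB) v b1" for b1
  proof (cases "b1 \<in> I1")
    case True
    then show ?thesis
      using V(2)[THEN fun_cong, of "Inl (b1, k_eps)"] k_eps
      by (simp add: v(2) pi_upper_Inl transp_tot_d1_times_eps_Inl)
  qed (use \<beta>v in \<open>simp add: mat_app_out vecsD\<close>)
  with v(1) show ?thesis
    unfolding bounds_def by (auto simp: fun_eq_iff)
qed

lemma cocycle_Inr_part_annihilates_cycles:
  assumes \<psi>: "\<psi> \<in> cycles C1 (I1 \<times> K1) (transp d2)" and b0: "b0 \<in> I0"
    and y: "y \<in> cycles K1 K0 dF"
  shows "(\<Sum>i\<in>K1. \<psi> (Inr (b0, i)) * y i) = 0"
proof -
  define t where "t b = (\<Sum>i\<in>K1. \<psi> (Inr (b, i)) * y i)" for b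
  \<comment> \<open>Pairing the cocycle condition with b1 \<otimes> y, the term through dF drops out and the
    phi fix y, so t is annihilated by the transpose of dB, which is injective.\<close>
  have "(\<Sum>b\<in>I0. dB b1 b * t b) = 0" if b1: "b1 \<in> I1" for b1
  proof -
    have "(\<Sum>k\<in>K1. \<psi> (Inr (b, k)) * mat_app K1 K1 (g1 b1 b) y k) = t b"
      if "b \<in> I0" "dB b1 b \<noteq> 0" for b
      using fiber_aut1_fixes_cycles[OF b1 that(1,2) y] by (simp add: t_def)
    then have terms: "dB b1 b * (\<Sum>k1\<in>K1. y k1 * (\<Sum>k\<in>K1. \<psi> (Inr (b, k)) * g1 b1 b k1 k)) = dB b1 b * t b"
      if "b \<in> I0" for b
      using that by (cases "dB b1 b = 0") (simp_all add: sum_mult_mat_app)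
    have "0 = (\<Sum>k1\<in>K1. y k1 * mat_app C1 (I1 \<times> K1) (transp d2) \<psi> (b1, k1))"
      using \<psi> by (simp add: cycles_def)
    also have "\<dots> = (\<Sum>k1\<in>K1. y k1 * (\<Sum>k\<in>K0. \<psi> (Inl (b1, k)) * dF k1 k))
        + (\<Sum>k1\<in>K1. \<Sum>b\<in>I0. dB b1 b * (y k1 * (\<Sum>k\<in>K1. \<psi> (Inr (b, k)) * g1 b1 b k1 k)))"
      using b1 y by (simp add: transp_tot_d2_app distrib_left sum.distrib sum_distrib_left mult_ac cycles_def)
    also have "\<dots> = (\<Sum>k1\<in>K1. y k1 * (\<Sum>k\<in>K0. \<psi> (Inl (b1, k)) * dF k1 k))
        + (\<Sum>b\<in>I0. dB b1 b * (\<Sum>k1\<in>K1. y k1 * (\<Sum>k\<in>K1. \<psi> (Inr (b, k)) * g1 b1 b k1 k)))"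
      using sum.swap[of "\<lambda>k1 b. dB b1 b * (y k1 * (\<Sum>k\<in>K1. \<psi> (Inr (b, k)) * g1 b1 b k1 k))" I0 K1]
      by (simp add: sum_distrib_left)
    also have "\<dots> = (\<Sum>b\<in>I0. dB b1 b * t b)"
      using y sum.cong[OF refl terms, of I0] by (simp add: sum_mult_mat_app cycles_def)
    finally show ?thesis ..
  qed
  then have "t b0 = 0"
    using transp_dB_injective[OF _ b0] by blast
  then show ?thesis
    by (simp add: t_def)
qed

lemma pullback_if_Inr_part_zero:
  assumes \<psi>: "\<psi> \<in> cycles C1 (I1 \<times> K1) (transp d2)" and Inr0: "\<And>b0 k. \<psi> (Inr (b0, k)) = 0"
  shows "\<exists>\<beta>\<in>vecs I1. \<psi> = mat_app I1 C1 (pi_upper eps) \<beta>"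
proof -
  define \<beta> where "\<beta> b1 = (if b1 \<in> I1 then (\<Sum>k\<in>K0. \<psi> (Inl (b1, k)) * eps_section k) else 0)" for b1
  have Inl_eq: "\<psi> (Inl (b1, k)) = \<beta> b1 * eps k" if b1: "b1 \<in> I1" and k: "k \<in> K0" for b1 k
  proof -
    have "(\<Sum>k\<in>K0. dF k1 k * \<psi> (Inl (b1, k))) = 0" if "k1 \<in> K1" for k1
      using \<psi> transp_tot_d2_app[OF b1 that, of \<psi>] by (simp add: cycles_def Inr0 mult.commute)
    then show ?thesis
      using cocycle_eq_multiple_of_eps[OF _ k] b1 by (simp add: \<beta>_def)
  qed
  have \<psi>v: "\<psi> \<in> vecs C1"
    using \<psi> by (simp add: cycles_def)
  have "\<psi> p = mat_app I1 C1 (pi_upper eps) \<beta> p" for p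
  proof (cases p)
    case (Inl q)
    then obtain b1 k where p: "p = Inl (b1, k)"
      by (cases q) auto
    then show ?thesis
      using Inl_eq \<psi>v by (cases "b1 \<in> I1 \<and> k \<in> K0") (auto simp: pi_upper_Inl vecsD mat_app_out)
  qed (metis Inr0 pi_upper_Inr surj_pair)
  moreover have "\<beta> \<in> vecs I1"
    by (auto simp: vecs_def \<beta>_def)
  ultimately show ?thesis
    by (auto simp: fun_eq_iff)
qed

lemma pi_upper_surj:
  assumes \<psi>: "\<psi> \<in> cycles C1 (I1 \<times> K1) (transp d2)"
  shows "\<exists>\<beta>\<in>vecs I1.
    (\<lambda>j. mat_app I1 C1 (pi_upper eps) \<beta> j - \<psi> j) \<in> bounds (I0 \<times> K0) C1 (transp d1)"
proof -
  have \<psi>v: "\<psi> \<in> vecs C1"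
    using \<psi> by (simp add: cycles_def)
  have "\<forall>b0\<in>I0. \<exists>V0. \<forall>i\<in>K1. \<psi> (Inr (b0, i)) = (\<Sum>j\<in>K0. V0 j * dF i j)"
  proof
    fix b0 assume "b0 \<in> I0"
    then show "\<exists>V0. \<forall>i\<in>K1. \<psi> (Inr (b0, i)) = (\<Sum>j\<in>K0. V0 j * dF i j)"
      using cocycle_Inr_part_annihilates_cycles[OF \<psi>] fin
      by (intro functional_vanishing_on_cycles_factors) auto
  qed
  then obtain V0 where V0: "\<And>b0 i. b0 \<in> I0 \<Longrightarrow> i \<in> K1 \<Longrightarrow> \<psi> (Inr (b0, i)) = (\<Sum>j\<in>K0. V0 b0 j * dF i j)"
    by (metis bchoice)
  \<comment> \<open>Adding the coboundary of V kills the B_0 \<otimes> F_1 part of psi.\<close>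
  define V where "V = (\<lambda>(b0, k). if b0 \<in> I0 \<and> k \<in> K0 then V0 b0 k else 0)"
  have Vv: "V \<in> vecs (I0 \<times> K0)"
    by (auto simp: vecs_def V_def)
  define \<psi>' where "\<psi>' = (\<lambda>p. \<psi> p + mat_app (I0 \<times> K0) C1 (transp d1) V p)"
  have "\<psi>' \<in> cycles C1 (I1 \<times> K1) (transp d2)"
    using \<psi> transp_tot_d2_transp_tot_d1_zero
    by (auto simp: cycles_def \<psi>'_def vecs_def mat_app_out mat_app_add)
  moreover have "\<psi>' (Inr (b0, k)) = 0" for b0 k
  proof (cases "b0 \<in> I0 \<and> k \<in> K1")
    case True
    then show ?thesis
      using V0 by (auto simp: \<psi>'_def transp_tot_d1_Inr V_def intro!: sum.cong)
  next
    case False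
    then show ?thesis
      using \<psi>v by (simp add: \<psi>'_def mat_app_out vecsD)
  qed
  ultimately obtain \<beta> where \<beta>: "\<beta> \<in> vecs I1" "\<psi>' = mat_app I1 C1 (pi_upper eps) \<beta>"
    using pullback_if_Inr_part_zero by blast
  have "(\<lambda>j. mat_app I1 C1 (pi_upper eps) \<beta> j - \<psi> j) = mat_app (I0 \<times> K0) C1 (transp d1) V"
    unfolding \<beta>(2)[symmetric] by (simp add: \<psi>'_def fun_eq_iff)
  then show ?thesis
    using \<beta>(1) Vv by (auto simp: bounds_def)
qed

end

theorem mainTheorem3:
  fixes I1 :: "'b1 set" and I0 :: "'b0 set" and K1 :: "'k1 set" and K0 :: "'k0 set"
    and dB :: "'b1 \<Rightarrow> 'b0 \<Rightarrow> bit" and dF :: "'k1 \<Rightarrow> 'k0 \<Rightarrow> bit"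
    and phi :: "'b1 \<Rightarrow> 'b0 \<Rightarrow> ('k1 \<Rightarrow> 'k1 \<Rightarrow> bit) \<times> ('k0 \<Rightarrow> 'k0 \<Rightarrow> bit)"
    and eps :: "'k0 \<Rightarrow> bit"
  assumes fin: "finite I1" "finite I0" "finite K1" "finite K0"
    and conn: "is_connection I1 I0 dB K1 K0 dF phi"
    and triv_H0: "\<forall>b1\<in>I1. \<forall>b0\<in>I0. dB b1 b0 \<noteq> 0 \<longrightarrow>
          induces_identity_on_homology K1 K0 ({} :: unit set) dF (\<lambda>_ _. 0) (snd (phi b1 b0))"
    and triv_H1: "\<forall>b1\<in>I1. \<forall>b0\<in>I0. dB b1 b0 \<noteq> 0 \<longrightarrow>
          induces_identity_on_homology ({} :: unit set) K1 K0 (\<lambda>_ _. 0) dF (fst (phi b1 b0))"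
    and aug: "\<forall>v\<in>vecs K1. mat_app K0 (UNIV :: unit set) (\<lambda>k _. eps k) (mat_app K1 K0 dF v) = (\<lambda>_. 0)"
    and aug_iso: "induces_homology_iso K1 K0 ({} :: unit set) dF (\<lambda>_ _. 0)
          ({} :: unit set) (UNIV :: unit set) ({} :: unit set) (\<lambda>_ _. 0) (\<lambda>_ _. 0) (\<lambda>k _. eps k)"
    and H0B: "cycles I0 ({} :: unit set) (\<lambda>_ _. 0) \<subseteq> bounds I1 I0 dB"
  shows "induces_homology_iso
           (I1 \<times> K1) (tot_C1 I1 I0 K1 K0) (I0 \<times> K0) (tot_d2 dB dF phi) (tot_d1 dB dF phi)
           ({} :: unit set) I1 I0 (\<lambda>_ _. 0) dB
           (pi_lower eps)
       \<and> induces_homology_iso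
           I0 I1 ({} :: unit set) (transp dB) (\<lambda>_ _. 0)
           (I0 \<times> K0) (tot_C1 I1 I0 K1 K0) (I1 \<times> K1) (transp (tot_d1 dB dF phi)) (transp (tot_d2 dB dF phi))
           (pi_upper eps)"
proof -
  interpret fiber_bundle I1 I0 K1 K0 dB dF phi eps
    by (rule fiber_bundle.intro) (fact+)
  show ?thesis
    unfolding induces_homology_iso_def cycles_to_empty
    using pi_lower_cycles pi_lower_bounds pi_lower_surj pi_lower_inj
      pi_upper_cycles pi_upper_bounds pi_upper_surj pi_upper_inj
    by blast
qed

end
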